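(* Let $N\ge2$. There does not exist any pure $(N-1)$-DI qubit assemblage $\sigma^{\mathrm{bit}}_{\boldsymbol a|\boldsymbol x}=P_{\boldsymbol A|\boldsymbol X}(\boldsymbol a|\boldsymbol x)\,|\psi(\boldsymbol a,\boldsymbol x)\rangle\langle\psi(\boldsymbol a,\boldsymbol x)|$, with $\boldsymbol a=(a_1,\dots,a_{N-1})$ and $\boldsymbol x=(x_1,\dots,x_{N-1})$ ranging over finite sets, that can be transformed via 1W-LOCCs into every qubit assemblage of minimal dimension $\{\sigma^{(\mathrm{target})}_{a|x}\}_{a,x\in\{0,1\}}$.
   Context: A pure $(N-1)$-DI qubit assemblage consists of a conditional probability distribution $P_{\boldsymbol A|\boldsymbol X}(\boldsymbol a|\boldsymbol x)$ of the outputs $\boldsymbol a$ of $N-1$ untrusted parties given their inputs $\boldsymbol x$, and unit vectors $|\psi(\boldsymbol a,\boldsymbol x)\rangle\in\mathbb C^2$ of a trusted party, such that no-signaling holds between the trusted party and the untrusted ones: $\sum_{\boldsymbol a}\sigma^{\mathrm{bit}}_{\boldsymbol a|\boldsymbol x}$ is independent of $\boldsymbol x$ (the untrusted parties may signal among themselves). A qubit assemblage of minimal dimension is a family $\{\sigma_{a|x}\}_{a,x\in\{0,1\}}$ of positive semidefinite operators on $\mathbb C^2$ with $\sum_a\sigma_{a|x}$ a density operator independent of $x$. A 1W-LOCC (one-way local operation with classical communication from the trusted to the untrusted parties) maps $\sigma^{\mathrm{bit}}$ to the assemblage $\sigma'_{a_f|x_f}=\sum_{\boldsymbol a,\boldsymbol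 x,\omega}P_{\boldsymbol X|X_f,\Omega}(\boldsymbol x|x_f,\omega)\,P_{A_f|\boldsymbol A,\boldsymbol X,\Omega,X_f}(a_f|\boldsymbol a,\boldsymbol x,\omega,x_f)\,P_{\boldsymbol A|\boldsymbol X}(\boldsymbol a|\boldsymbol x)\,K_\omega|\psi(\boldsymbol a,\boldsymbol x)\rangle\langle\psi(\boldsymbol a,\boldsymbol x)|K_\omega^\dagger$, where $\{K_\omega\}$ are the Kraus operators (acting on $\mathbb C^2$) of a quantum instrument on the trusted party whose classical outcome $\omega$ is communicated to the untrusted parties, and $P_{\boldsymbol X|X_f,\Omega}$, $P_{A_f|\boldsymbol A,\boldsymbol X,\Omega,X_f}$ are conditional probability distributions (classical pre- and post-processing), with $a_f,x_f\in\{0,1\}$. *)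

theory Defs
  imports "HOL-Analysis.Analysis" "HOL-Library.Complex_Order"
begin

type_synonym cvec = "complex ^ 2"
type_synonym cmat = "complex ^ 2 ^ 2"

definition adjm :: "cmat \<Rightarrow> cmat" where
  "adjm M = (\<chi> i j. cnj (M $ j $ i))"

definition outer :: "cvec \<Rightarrow> cmat" where
  "outer v = (\<chi> i j. v $ i * cnj (v $ j))"

definition trace2 :: "cmat \<Rightarrow> complex" where
  "trace2 M = (\<Sum>i\<in>UNIV. M $ i $ i)"

definition psd :: "cmat \<Rightarrow> bool" where
  "psd M \<longleftrightarrow> (\<forall>v::cvec. 0 \<le> (\<Sum>i\<in>UNIV. cnj (v $ i) * (M *v v) $ i))"

definition density_op :: "cmat \<Rightarrow> bool" where
  "density_op M \<longleftrightarrow> psd M \<and> trace2 M = 1"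

definition qubit_assemblage :: "(nat \<Rightarrow> nat \<Rightarrow> cmat) \<Rightarrow> bool" where
  "qubit_assemblage \<sigma> \<longleftrightarrow>
     (\<forall>a\<in>{0,1}. \<forall>x\<in>{0,1}. psd (\<sigma> a x)) \<and>
     density_op (\<sigma> 0 0 + \<sigma> 1 0) \<and>
     \<sigma> 0 0 + \<sigma> 1 0 = \<sigma> 0 1 + \<sigma> 1 1"

text \<open>Tuples (s_1,...,s_{N-1}) with s_i in S i, represented as lists of length N-1 (indices 0..N-2).\<close>
definition tuples :: "nat \<Rightarrow> (nat \<Rightarrow> 'a set) \<Rightarrow> 'a list set" where
  "tuples N S = {l. length l = N - 1 \<and> (\<forall>i<N - 1. l ! i \<in> S i)}"

definition pure_DI_assemblage ::
  "nat list set \<Rightarrow> nat list set \<Rightarrow> (nat list \<Rightarrow> nat list \<Rightarrow> real) \<Rightarrow> (nat list \<Rightarrow> nat list \<Rightarrow> cvec) \<Rightarrow> bool" where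
  "pure_DI_assemblage OA IX P \<psi> \<longleftrightarrow>
     (\<forall>x\<in>IX. (\<forall>a\<in>OA. 0 \<le> P a x) \<and> (\<Sum>a\<in>OA. P a x) = 1) \<and>
     (\<forall>x\<in>IX. \<forall>a\<in>OA. norm (\<psi> a x) = 1) \<and>
     (\<forall>x\<in>IX. \<forall>x'\<in>IX. (\<Sum>a\<in>OA. P a x *\<^sub>R outer (\<psi> a x)) = (\<Sum>a\<in>OA. P a x' *\<^sub>R outer (\<psi> a x')))"

definition instrument :: "nat set \<Rightarrow> (nat \<Rightarrow> cmat) \<Rightarrow> bool" where
  "instrument Om K \<longleftrightarrow> finite Om \<and> (\<Sum>w\<in>Om. adjm (K w) ** K w) = mat 1"

text \<open>Result of a 1W-LOCC (instrument K on Om, pre-processing PX(x|xf,w), post-processing PA(af|a,x,w,xf)).\<close>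
definition locc_output ::
  "nat list set \<Rightarrow> nat list set \<Rightarrow> (nat list \<Rightarrow> nat list \<Rightarrow> real) \<Rightarrow> (nat list \<Rightarrow> nat list \<Rightarrow> cvec) \<Rightarrow>
   nat set \<Rightarrow> (nat \<Rightarrow> cmat) \<Rightarrow> (nat list \<Rightarrow> nat \<Rightarrow> nat \<Rightarrow> real) \<Rightarrow>
   (nat \<Rightarrow> nat list \<Rightarrow> nat list \<Rightarrow> nat \<Rightarrow> nat \<Rightarrow> real) \<Rightarrow> nat \<Rightarrow> nat \<Rightarrow> cmat" where
  "locc_output OA IX P \<psi> Om K PX PA af xf =
     (\<Sum>a\<in>OA. \<Sum>x\<in>IX. \<Sum>w\<in>Om.
        (PX x xf w * PA af a x w xf * P a x) *\<^sub>R (K w ** outer (\<psi> a x) ** adjm (K w)))"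

definition one_way_LOCC_reachable ::
  "nat list set \<Rightarrow> nat list set \<Rightarrow> (nat list \<Rightarrow> nat list \<Rightarrow> real) \<Rightarrow> (nat list \<Rightarrow> nat list \<Rightarrow> cvec) \<Rightarrow>
   (nat \<Rightarrow> nat \<Rightarrow> cmat) \<Rightarrow> bool" where
  "one_way_LOCC_reachable OA IX P \<psi> \<sigma>t \<longleftrightarrow>
     (\<exists>Om K PX PA.
        instrument Om K \<and>
        (\<forall>xf\<in>{0,1}. \<forall>w\<in>Om. (\<forall>x\<in>IX. 0 \<le> PX x xf w) \<and> (\<Sum>x\<in>IX. PX x xf w) = 1) \<and>
        (\<forall>a\<in>OA. \<forall>x\<in>IX. \<forall>w\<in>Om. \<forall>xf\<in>{0,1}.
            (\<forall>af\<in>{0,1}. 0 \<le> PA af a x w xf) \<and> PA 0 a x w xf + PA 1 a x w xf = 1) \<and>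
        (\<forall>af\<in>{0,1}. \<forall>xf\<in>{0,1}. locc_output OA IX P \<psi> Om K PX PA af xf = \<sigma>t af xf))"

end

theory Submission
  imports Defs
begin

(* For 0 < c < 1 the target assemblage (1/2)|t><t|, with t running through the two orthonormal
   bases {e1, e2} and {(sqrt c, sqrt (1 - c)), (-sqrt (1 - c), sqrt c)}, is a qubit assemblage.
   Its four elements are rank one, and a 1W-LOCC output is a sum of positive terms, so every
   Kraus operator K_w maps each state psi(a, x) contributing with positive weight onto a multiple
   of the corresponding target vector. No-signalling within a single branch w forces one branch
   to contribute to all four outputs; then one K_w, necessarily invertible, maps four of the
   states to nonzero multiples of the four target vectors. Cross-ratios of points of the
   projective line are invariant under such maps, so c is a cross-ratio of four of the finitely
   many states psi(a, x). Choosing c outside this finite set gives a contradiction. *)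

definition braket :: "cvec \<Rightarrow> cvec \<Rightarrow> complex" where
  "braket v y = (\<Sum>i\<in>UNIV. cnj (v $ i) * y $ i)"

definition qform :: "cvec \<Rightarrow> cmat \<Rightarrow> complex" where
  "qform v M = braket v (M *v v)"

lemma psd_iff_qform: "psd M \<longleftrightarrow> (\<forall>v. 0 \<le> qform v M)"
  by (simp add: psd_def qform_def braket_def)

lemma qform_add: "qform v (M + M') = qform v M + qform v M'"
  by (simp add: qform_def braket_def matrix_vector_mult_add_rdistrib sum.distrib algebra_simps)

lemma qform_scaleR: "qform v (r *\<^sub>R M) = of_real r * qform v M"
  by (simp add: qform_def braket_def sum_2 matrix_vector_mult_def vector_scaleR_component)
     (simp add: scaleR_conv_of_real algebra_simps)

lemma qform_zero: "qform v 0 = 0"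
  by (simp add: qform_def braket_def)

lemma qform_sum: "qform v (sum f I) = (\<Sum>i\<in>I. qform v (f i))"
  by (induction I rule: infinite_finite_induct) (simp_all add: qform_zero qform_add)

lemma qform_outer: "qform v (outer y) = of_real ((cmod (braket v y))\<^sup>2)"
proof -
  have "qform v (outer y) = braket v y * cnj (braket v y)"
    by (simp add: qform_def braket_def sum_2 matrix_vector_mult_def outer_def algebra_simps)
  then show ?thesis
    by (metis complex_norm_square)
qed

lemma psd_scaleR_outer: "0 \<le> r \<Longrightarrow> psd (r *\<^sub>R outer v)"
  by (simp add: psd_iff_qform qform_scaleR qform_outer less_eq_complex_def)

lemma psd_add: "psd M \<Longrightarrow> psd M' \<Longrightarrow> psd (M + M')"
  by (simp add: psd_iff_qform qform_add add_nonneg_nonneg)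

lemma outer_scale: "outer (l *s v) = (cmod l)\<^sup>2 *\<^sub>R outer v"
  by (simp add: vec_eq_iff outer_def vector_scaleR_component)
     (simp add: scaleR_conv_of_real flip: complex_norm_square)

lemma outer_eq_0_iff: "outer v = 0 \<longleftrightarrow> v = 0"
proof
  assume "outer v = 0"
  then have "outer v $ i $ i = 0" for i
    by simp
  then show "v = 0"
    by (simp add: outer_def vec_eq_iff)
qed (simp add: outer_def vec_eq_iff)

lemma matrix_outer_adjm: "K ** outer v ** adjm K = outer (K *v v)"
  by (simp add: vec_eq_iff forall_2 sum_2 matrix_matrix_mult_def matrix_vector_mult_def
      outer_def adjm_def algebra_simps)

lemma matrix_scaleR_middle:
  fixes A B M :: "'a::real_algebra_1 ^ 'n ^ 'n"
  shows "A ** (r *\<^sub>R M) ** B = r *\<^sub>R (A ** M ** B)"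
  by (simp add: vec_eq_iff matrix_matrix_mult_def mult_scaleR_left flip: scaleR_sum_right)

lemma matrix_sandwich_add:
  fixes A B M M' :: "'a::semiring_1 ^ 'n ^ 'n"
  shows "A ** (M + M') ** B = A ** M ** B + A ** M' ** B"
  by (simp add: vec_eq_iff matrix_matrix_mult_def sum.distrib distrib_left distrib_right)

lemma matrix_sandwich_sum:
  fixes A B :: "'a::semiring_1 ^ 'n ^ 'n"
  shows "A ** sum f I ** B = (\<Sum>i\<in>I. A ** f i ** B)"
  by (induction I rule: infinite_finite_induct) (simp_all add: matrix_sandwich_add)

lemma sum_scaleR_outer_matrix:
  "(\<Sum>i\<in>I. c i *\<^sub>R outer (K *v v i)) = K ** (\<Sum>i\<in>I. c i *\<^sub>R outer (v i)) ** adjm K"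
  by (simp add: matrix_sandwich_sum matrix_scaleR_middle matrix_outer_adjm)

definition wedge :: "'a::comm_ring ^ 2 \<Rightarrow> 'a ^ 2 \<Rightarrow> 'a" where
  "wedge u v = u $ 1 * v $ 2 - u $ 2 * v $ 1"

lemma wedge_self [simp]: "wedge u u = 0"
  by (simp add: wedge_def mult.commute)

lemma wedge_matrix_vector_mult:
  fixes A :: "'a::comm_ring_1 ^ 2 ^ 2"
  shows "wedge (A *v u) (A *v v) = det A * wedge u v"
  by (simp add: wedge_def det_2 matrix_vector_mult_def sum_2 algebra_simps)

lemma wedge_scale: "wedge (a *s u) (b *s v) = a * b * wedge u v"
  by (simp add: wedge_def algebra_simps)

definition orth :: "cvec \<Rightarrow> cvec" where
  "orth t = vector [- cnj (t $ 2), cnj (t $ 1)]"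

lemma braket_orth: "braket (orth t) y = wedge t y"
  by (simp add: braket_def orth_def wedge_def sum_2)

lemma braket_self: "braket t t = of_real ((norm t)\<^sup>2)"
  by (simp add: braket_def norm_vec_def L2_set_def sum_2 mult.commute flip: complex_norm_square)

lemma parallel_if_wedge_eq_0:
  assumes "norm t = 1" and "wedge t y = 0"
  shows "y = braket t y *s t"
proof -
  have unit: "t $ 1 * cnj (t $ 1) + t $ 2 * cnj (t $ 2) = 1"
    using braket_self[of t] assms(1) by (simp add: braket_def sum_2 mult.commute)
  have par: "t $ 1 * y $ 2 = t $ 2 * y $ 1"
    using assms(2) by (simp add: wedge_def)
  have "braket t y * t $ i = (t $ 1 * cnj (t $ 1) + t $ 2 * cnj (t $ 2)) * y $ i" for i
    using exhaust_2[of i] par by (auto simp: braket_def sum_2 algebra_simps)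
  then show ?thesis
    by (simp add: vec_eq_iff unit mult.commute)
qed

(* The cross-ratio (z1, z3; z4, z2) of the points z_i = u_i$1 / u_i$2 of the projective line,
   where (a, b; c, d) = (a - c) (b - d) / ((b - c) (a - d)); this ordering gives the target
   vectors below the cross-ratio c. *)
definition cross_ratio :: "'a::field ^ 2 \<Rightarrow> 'a ^ 2 \<Rightarrow> 'a ^ 2 \<Rightarrow> 'a ^ 2 \<Rightarrow> 'a" where
  "cross_ratio u1 u2 u3 u4 = wedge u1 u4 * wedge u3 u2 / (wedge u1 u2 * wedge u3 u4)"

lemma cross_ratio_matrix_vector_mult:
  fixes A :: "'a::field ^ 2 ^ 2"
  assumes "det A \<noteq> 0"
  shows "cross_ratio (A *v u1) (A *v u2) (A *v u3) (A *v u4) = cross_ratio u1 u2 u3 u4"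
proof -
  have "cross_ratio (A *v u1) (A *v u2) (A *v u3) (A *v u4)
      = (det A * det A) * (wedge u1 u4 * wedge u3 u2) / ((det A * det A) * (wedge u1 u2 * wedge u3 u4))"
    by (simp add: cross_ratio_def wedge_matrix_vector_mult algebra_simps)
  then show ?thesis
    using assms by (simp add: cross_ratio_def)
qed

lemma cross_ratio_scale:
  fixes l1 l2 l3 l4 :: "'a::field"
  assumes "l1 \<noteq> 0" "l2 \<noteq> 0" "l3 \<noteq> 0" "l4 \<noteq> 0"
  shows "cross_ratio (l1 *s u1) (l2 *s u2) (l3 *s u3) (l4 *s u4) = cross_ratio u1 u2 u3 u4"
proof -
  have "cross_ratio (l1 *s u1) (l2 *s u2) (l3 *s u3) (l4 *s u4)
      = (l1 * l2 * l3 * l4) * (wedge u1 u4 * wedge u3 u2) / ((l1 * l2 * l3 * l4) * (wedge u1 u2 * wedge u3 u4))"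
    by (simp add: cross_ratio_def wedge_scale algebra_simps)
  then show ?thesis
    using assms by (simp add: cross_ratio_def)
qed

lemma cross_ratio_eq_if_matrix_maps_to_multiples:
  fixes A :: "'a::field ^ 2 ^ 2"
  assumes maps: "A *v u1 = l1 *s t1" "A *v u2 = l2 *s t2" "A *v u3 = l3 *s t3" "A *v u4 = l4 *s t4"
    and nonzero: "l1 \<noteq> 0" "l2 \<noteq> 0" "l3 \<noteq> 0" "l4 \<noteq> 0"
    and independent: "wedge t1 t2 \<noteq> 0"
  shows "cross_ratio u1 u2 u3 u4 = cross_ratio t1 t2 t3 t4"
proof -
  have "det A * wedge u1 u2 = l1 * l2 * wedge t1 t2"
    by (metis maps(1,2) wedge_matrix_vector_mult wedge_scale)
  then have "det A \<noteq> 0"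
    using nonzero independent by auto
  then have "cross_ratio u1 u2 u3 u4 = cross_ratio (A *v u1) (A *v u2) (A *v u3) (A *v u4)"
    by (simp add: cross_ratio_matrix_vector_mult)
  also have "\<dots> = cross_ratio t1 t2 t3 t4"
    unfolding maps using nonzero by (rule cross_ratio_scale)
  finally show ?thesis .
qed

definition cross_ratios :: "('a::field ^ 2) set \<Rightarrow> 'a set" where
  "cross_ratios V = {cross_ratio u1 u2 u3 u4 | u1 u2 u3 u4. u1 \<in> V \<and> u2 \<in> V \<and> u3 \<in> V \<and> u4 \<in> V}"

lemma finite_cross_ratios: "finite V \<Longrightarrow> finite (cross_ratios V)"
proof -
  assume "finite V"
  moreover have "cross_ratios V = (\<lambda>(u1, u2, u3, u4). cross_ratio u1 u2 u3 u4) ` (V \<times> V \<times> V \<times> V)"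
    by (auto simp: cross_ratios_def image_def)
  ultimately show ?thesis
    by simp
qed

lemma exists_real_avoiding_finite:
  assumes "finite (F :: complex set)"
  obtains c :: real where "0 < c" "c < 1" "complex_of_real c \<notin> F"
proof -
  have "finite (of_real -` F :: real set)"
    using assms by (rule finite_vimageI) (simp add: inj_of_real)
  then have "infinite ({0<..<1} - of_real -` F :: real set)"
    by (simp add: Diff_infinite_finite)
  then obtain c where "c \<in> {0<..<1} - of_real -` F"
    using infinite_imp_nonempty by blast
  then show ?thesis
    using that by auto
qed

definition target_vec :: "real \<Rightarrow> nat \<Rightarrow> nat \<Rightarrow> cvec" where
  "target_vec c af xf =
     (if xf = 0 then if af = 0 then vector [1, 0] else vector [0, 1]
      else if af = 0 then vector [of_real (sqrt c), of_real (sqrt (1 - c))]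
      else vector [- of_real (sqrt (1 - c)), of_real (sqrt c)])"

definition target_assemblage :: "real \<Rightarrow> nat \<Rightarrow> nat \<Rightarrow> cmat" where
  "target_assemblage c af xf = (1 / 2) *\<^sub>R outer (target_vec c af xf)"

lemma norm_target_vec:
  assumes "0 \<le> c" "c \<le> 1"
  shows "norm (target_vec c af xf) = 1"
  using assms by (simp add: target_vec_def norm_vec_def L2_set_def sum_2)

lemma outer_target_vec_resolution:
  assumes "0 \<le> c" "c \<le> 1"
  shows "outer (target_vec c 0 xf) + outer (target_vec c 1 xf) = mat 1"
proof -
  have "complex_of_real (sqrt c) * of_real (sqrt c) + of_real (sqrt (1 - c)) * of_real (sqrt (1 - c)) = 1"
    using assms by (simp flip: of_real_mult)
  then show ?thesis
    by (simp add: target_vec_def vec_eq_iff forall_2 outer_def mat_def algebra_simps)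
qed

lemma qubit_assemblage_target:
  assumes "0 \<le> c" "c \<le> 1"
  shows "qubit_assemblage (target_assemblage c)"
proof -
  have marginal: "target_assemblage c 0 xf + target_assemblage c 1 xf = (1 / 2) *\<^sub>R mat 1" for xf
    using outer_target_vec_resolution[OF assms]
    by (simp add: target_assemblage_def flip: scaleR_add_right)
  have psd: "psd (target_assemblage c af xf)" for af xf
    by (simp add: target_assemblage_def psd_scaleR_outer)
  show ?thesis
    unfolding qubit_assemblage_def density_op_def marginal
  proof (intro conjI ballI psd)
    show "psd ((1 / 2) *\<^sub>R mat 1)"
      using psd_add[OF psd[of 0 0] psd[of 1 0]] by (simp only: marginal)
    show "trace2 ((1 / 2) *\<^sub>R mat 1) = 1"
      by (simp add: trace2_def sum_2 mat_def vector_scaleR_component) (simp add: scaleR_conv_of_real)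
  qed simp
qed

lemma wedge_target_vec_0: "wedge (target_vec c 0 0) (target_vec c 1 0) = 1"
  by (simp add: wedge_def target_vec_def)

lemma cross_ratio_target_vec:
  assumes "0 \<le> c" "c \<le> 1"
  shows "cross_ratio (target_vec c 0 0) (target_vec c 1 0) (target_vec c 0 1) (target_vec c 1 1) = of_real c"
proof -
  have "complex_of_real (sqrt c) * of_real (sqrt c) = of_real c"
    using assms by (simp flip: of_real_mult)
  moreover have "complex_of_real (sqrt (1 - c)) * of_real (sqrt (1 - c)) = 1 - of_real c"
    using assms by (simp flip: of_real_mult)
  ultimately show ?thesis
    by (simp add: cross_ratio_def wedge_def target_vec_def algebra_simps)
qed

lemma target_vec_balance:
  fixes s00 s10 s01 s11 :: real
  assumes "0 < c" "c < 1"
    and balance: "s00 *\<^sub>R outer (target_vec c 0 0) + s10 *\<^sub>R outer (target_vec c 1 0)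
                = s01 *\<^sub>R outer (target_vec c 0 1) + s11 *\<^sub>R outer (target_vec c 1 1)"
  shows "s10 = s00 \<and> s01 = s00 \<and> s11 = s00"
proof -
  define p r where "p = sqrt c" and "r = sqrt (1 - c)"
  have "p * p = c" "r * r = 1 - c" "p * r \<noteq> 0"
    using assms(1,2) by (simp_all add: p_def r_def)
  have entry: "Re ((s00 *\<^sub>R outer (target_vec c 0 0) + s10 *\<^sub>R outer (target_vec c 1 0)) $ i $ j)
             = Re ((s01 *\<^sub>R outer (target_vec c 0 1) + s11 *\<^sub>R outer (target_vec c 1 1)) $ i $ j)" for i j
    using balance by simp
  have "s00 = s01 * (p * p) + s11 * (r * r)"
    using entry[of 1 1] by (simp add: target_vec_def outer_def p_def r_def)
  moreover have "s10 = s01 * (r * r) + s11 * (p * p)"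
    using entry[of 2 2] by (simp add: target_vec_def outer_def p_def r_def)
  moreover have "0 = (s01 - s11) * (p * r)"
    using entry[of 1 2] by (simp add: target_vec_def outer_def p_def r_def algebra_simps)
  ultimately show ?thesis
    using \<open>p * p = c\<close> \<open>r * r = 1 - c\<close> \<open>p * r \<noteq> 0\<close> by (simp add: algebra_simps)
qed

locale one_way_LOCC =
  fixes OA IX :: "nat list set"
    and P :: "nat list \<Rightarrow> nat list \<Rightarrow> real"
    and \<psi> :: "nat list \<Rightarrow> nat list \<Rightarrow> cvec"
    and Om :: "nat set"
    and K :: "nat \<Rightarrow> cmat"
    and PX :: "nat list \<Rightarrow> nat \<Rightarrow> nat \<Rightarrow> real"
    and PA :: "nat \<Rightarrow> nat list \<Rightarrow> nat list \<Rightarrow> nat \<Rightarrow> nat \<Rightarrow> real"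
  assumes finite_OA: "finite OA" and finite_IX: "finite IX" and finite_Om: "finite Om"
    and assemblage: "pure_DI_assemblage OA IX P \<psi>"
    and pre_processing:
      "\<forall>xf\<in>{0,1}. \<forall>w\<in>Om. (\<forall>x\<in>IX. 0 \<le> PX x xf w) \<and> (\<Sum>x\<in>IX. PX x xf w) = 1"
    and post_processing:
      "\<forall>a\<in>OA. \<forall>x\<in>IX. \<forall>w\<in>Om. \<forall>xf\<in>{0,1}.
         (\<forall>af\<in>{0,1}. 0 \<le> PA af a x w xf) \<and> PA 0 a x w xf + PA 1 a x w xf = 1"
begin

definition weight :: "nat \<Rightarrow> nat \<Rightarrow> nat \<Rightarrow> nat list \<Rightarrow> nat list \<Rightarrow> real" where
  "weight w af xf a x = PX x xf w * PA af a x w xf * P a x"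

definition branch :: "nat \<Rightarrow> nat \<Rightarrow> nat \<Rightarrow> cmat" where
  "branch w af xf = (\<Sum>a\<in>OA. \<Sum>x\<in>IX. weight w af xf a x *\<^sub>R outer (K w *v \<psi> a x))"

lemma weight_nonneg:
  assumes "w \<in> Om" "af \<in> {0,1}" "xf \<in> {0,1}" "a \<in> OA" "x \<in> IX"
  shows "0 \<le> weight w af xf a x"
proof -
  have "0 \<le> P a x"
    using assemblage assms(4,5) by (simp add: pure_DI_assemblage_def)
  moreover have "0 \<le> PX x xf w" "0 \<le> PA af a x w xf"
    using pre_processing post_processing assms by blast+
  ultimately show ?thesis
    by (simp add: weight_def)
qed

lemma locc_output_eq_sum_branch:
  "locc_output OA IX P \<psi> Om K PX PA af xf = (\<Sum>w\<in>Om. branch w af xf)"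
  unfolding locc_output_def branch_def weight_def matrix_outer_adjm
  by (subst sum.swap) (simp add: sum.swap[of _ IX])

definition marginal :: "nat list \<Rightarrow> cmat" where
  "marginal x = (\<Sum>a\<in>OA. P a x *\<^sub>R outer (\<psi> a x))"

lemma marginal_eq: "x \<in> IX \<Longrightarrow> x' \<in> IX \<Longrightarrow> marginal x = marginal x'"
  using assemblage unfolding pure_DI_assemblage_def marginal_def by blast

lemma branch_marginal:
  assumes "w \<in> Om" "xf \<in> {0,1}" "x0 \<in> IX"
  shows "branch w 0 xf + branch w 1 xf = K w ** marginal x0 ** adjm (K w)"
proof -
  have weight_sum: "weight w 0 xf a x + weight w 1 xf a x = PX x xf w * P a x"
    if "a \<in> OA" "x \<in> IX" for a x
  proof -
    have "weight w 0 xf a x + weight w 1 xf a x = PX x xf w * (PA 0 a x w xf + PA 1 a x w xf) * P a x"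
      by (simp add: weight_def algebra_simps)
    also have "PA 0 a x w xf + PA 1 a x w xf = 1"
      using post_processing assms(1,2) that by blast
    finally show ?thesis
      by simp
  qed
  have "branch w 0 xf + branch w 1 xf
      = (\<Sum>a\<in>OA. \<Sum>x\<in>IX. (weight w 0 xf a x + weight w 1 xf a x) *\<^sub>R outer (K w *v \<psi> a x))"
    unfolding branch_def by (simp only: sum.distrib scaleR_add_left)
  also have "\<dots> = (\<Sum>a\<in>OA. \<Sum>x\<in>IX. (PX x xf w * P a x) *\<^sub>R outer (K w *v \<psi> a x))"
    by (intro sum.cong refl) (simp only: weight_sum)
  also have "\<dots> = (\<Sum>x\<in>IX. PX x xf w *\<^sub>R (\<Sum>a\<in>OA. P a x *\<^sub>R outer (K w *v \<psi> a x)))"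
    by (subst sum.swap) (simp add: scaleR_sum_right)
  also have "\<dots> = (\<Sum>x\<in>IX. PX x xf w *\<^sub>R (K w ** marginal x ** adjm (K w)))"
    by (simp add: sum_scaleR_outer_matrix marginal_def)
  also have "\<dots> = (\<Sum>x\<in>IX. PX x xf w) *\<^sub>R (K w ** marginal x0 ** adjm (K w))"
    using marginal_eq[OF _ assms(3)] by (simp add: scaleR_sum_left)
  also have "(\<Sum>x\<in>IX. PX x xf w) = 1"
    using pre_processing assms(1,2) by blast
  finally show ?thesis
    by simp
qed

lemma branch_no_signalling:
  assumes "w \<in> Om" "xf \<in> {0,1}" "xf' \<in> {0,1}"
  shows "branch w 0 xf + branch w 1 xf = branch w 0 xf' + branch w 1 xf'"
proof -
  have "IX \<noteq> {}"
    using pre_processing assms(1) by fastforce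
  then obtain x0 where "x0 \<in> IX"
    by blast
  then show ?thesis
    using branch_marginal assms by simp
qed

lemma wedge_eq_0_if_weight_pos:
  assumes sum_branch: "(\<Sum>w\<in>Om. branch w af xf) = s *\<^sub>R outer t"
    and "af \<in> {0,1}" "xf \<in> {0,1}" "w \<in> Om" "a \<in> OA" "x \<in> IX"
    and "0 < weight w af xf a x"
  shows "wedge t (K w *v \<psi> a x) = 0"
proof -
  \<comment> \<open>orth t is orthogonal to t, so the quadratic form at orth t annihilates the
     output, while on the branch decomposition it is a sum of nonnegative terms.\<close>
  define h where "h w a x = weight w af xf a x * (cmod (wedge t (K w *v \<psi> a x)))\<^sup>2" for w a x
  have "of_real (\<Sum>w\<in>Om. \<Sum>a\<in>OA. \<Sum>x\<in>IX. h w a x) = qform (orth t) (\<Sum>w\<in>Om. branch w af xf)"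
    by (simp add: branch_def qform_sum qform_scaleR qform_outer braket_orth h_def)
  also have "\<dots> = 0"
    by (simp add: sum_branch qform_scaleR qform_outer braket_orth)
  finally have "(\<Sum>w\<in>Om. \<Sum>a\<in>OA. \<Sum>x\<in>IX. h w a x) = 0"
    by (simp only: of_real_eq_0_iff)
  then have "(\<Sum>(w, a, x)\<in>Om \<times> OA \<times> IX. h w a x) = 0"
    by (simp add: sum.cartesian_product)
  moreover have "\<forall>(w, a, x)\<in>Om \<times> OA \<times> IX. 0 \<le> h w a x"
    using weight_nonneg assms(2,3) by (auto simp: h_def)
  ultimately have "h w a x = 0"
    using sum_nonneg_eq_0_iff[of "Om \<times> OA \<times> IX" "\<lambda>(w, a, x). h w a x"]
      finite_Om finite_OA finite_IX assms(4-6) by auto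
  then show ?thesis
    using assms(7) by (simp add: h_def)
qed

lemma branch_eq_scaleR_outer:
  assumes sum_branch: "(\<Sum>w\<in>Om. branch w af xf) = s *\<^sub>R outer t"
    and "norm t = 1" "af \<in> {0,1}" "xf \<in> {0,1}" "w \<in> Om"
  obtains \<alpha> where "branch w af xf = \<alpha> *\<^sub>R outer t"
proof -
  have "weight w af xf a x *\<^sub>R outer (K w *v \<psi> a x)
      = (weight w af xf a x * (cmod (braket t (K w *v \<psi> a x)))\<^sup>2) *\<^sub>R outer t"
    if "a \<in> OA" "x \<in> IX" for a x
  proof (cases "weight w af xf a x = 0")
    case False
    then have "0 < weight w af xf a x"
      using weight_nonneg assms(3-5) that by (simp add: order_less_le)
    then have "K w *v \<psi> a x = braket t (K w *v \<psi> a x) *s t"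
      using wedge_eq_0_if_weight_pos[OF sum_branch] parallel_if_wedge_eq_0 assms(2-5) that
      by blast
    then show ?thesis
      by (metis outer_scale scaleR_scaleR)
  qed simp
  then have "branch w af xf
           = (\<Sum>a\<in>OA. \<Sum>x\<in>IX. weight w af xf a x * (cmod (braket t (K w *v \<psi> a x)))\<^sup>2) *\<^sub>R outer t"
    unfolding branch_def scaleR_sum_left by (intro sum.cong refl) simp
  then show ?thesis
    using that by blast
qed

lemma parallel_state_if_branch_nonzero:
  assumes sum_branch: "(\<Sum>w\<in>Om. branch w af xf) = s *\<^sub>R outer t"
    and "norm t = 1" "af \<in> {0,1}" "xf \<in> {0,1}" "w \<in> Om"
    and "branch w af xf \<noteq> 0"
  obtains a x l where "a \<in> OA" "x \<in> IX" "l \<noteq> 0" "K w *v \<psi> a x = l *s t"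
proof -
  obtain a x where a: "a \<in> OA" and x: "x \<in> IX"
    and term_nonzero: "weight w af xf a x *\<^sub>R outer (K w *v \<psi> a x) \<noteq> 0"
    using assms(6) unfolding branch_def by (meson sum.neutral)
  then have "0 < weight w af xf a x"
    using weight_nonneg assms(3-5) by (simp add: order_less_le)
  then have parallel: "K w *v \<psi> a x = braket t (K w *v \<psi> a x) *s t"
    using wedge_eq_0_if_weight_pos[OF sum_branch] parallel_if_wedge_eq_0 assms(2-5) a x
    by blast
  moreover have "braket t (K w *v \<psi> a x) \<noteq> 0"
    using term_nonzero parallel by (metis outer_eq_0_iff scaleR_zero_right vector_smult_lzero)
  ultimately show ?thesis
    using that a x by blast
qed

end

locale target_realisation = one_way_LOCC +
  fixes c :: real
  assumes c_pos: "0 < c" and c_less_1: "c < 1"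
    and realises: "\<forall>af\<in>{0,1}. \<forall>xf\<in>{0,1}.
                     locc_output OA IX P \<psi> Om K PX PA af xf = target_assemblage c af xf"
begin

lemma sum_branch_target:
  assumes "af \<in> {0,1}" "xf \<in> {0,1}"
  shows "(\<Sum>w\<in>Om. branch w af xf) = (1 / 2) *\<^sub>R outer (target_vec c af xf)"
  using realises assms unfolding locc_output_eq_sum_branch target_assemblage_def by blast

lemma norm_target: "norm (target_vec c af xf) = 1"
  using c_pos c_less_1 by (simp add: norm_target_vec)

lemma outer_target_nonzero: "outer (target_vec c af xf) \<noteq> 0"
  using norm_target by (metis outer_eq_0_iff norm_zero zero_neq_one)

lemma branch_scaleR_outer_target:
  assumes "af \<in> {0,1}" "xf \<in> {0,1}" "w \<in> Om"
  obtains \<alpha> where "branch w af xf = \<alpha> *\<^sub>R outer (target_vec c af xf)"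
  using branch_eq_scaleR_outer[OF sum_branch_target norm_target] assms by blast

lemma branches_nonzero:
  obtains w where "w \<in> Om" "\<forall>af\<in>{0,1}. \<forall>xf\<in>{0,1}. branch w af xf \<noteq> 0"
proof -
  have "(\<Sum>w\<in>Om. branch w 0 0) \<noteq> 0"
    using sum_branch_target[of 0 0] outer_target_nonzero by simp
  then obtain w where w: "w \<in> Om" and nonzero: "branch w 0 0 \<noteq> 0"
    by (meson sum.neutral)
  obtain s00 s10 s01 s11 where
    s00: "branch w 0 0 = s00 *\<^sub>R outer (target_vec c 0 0)" and
    s10: "branch w 1 0 = s10 *\<^sub>R outer (target_vec c 1 0)" and
    s01: "branch w 0 1 = s01 *\<^sub>R outer (target_vec c 0 1)" and
    s11: "branch w 1 1 = s11 *\<^sub>R outer (target_vec c 1 1)"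
    using branch_scaleR_outer_target w by (metis insertCI)
  have "s10 = s00 \<and> s01 = s00 \<and> s11 = s00"
    using target_vec_balance[OF c_pos c_less_1] branch_no_signalling[OF w, of 0 1] s00 s10 s01 s11
    by simp
  moreover have "s00 \<noteq> 0"
    using nonzero s00 by auto
  ultimately have "\<forall>af\<in>{0,1}. \<forall>xf\<in>{0,1}. branch w af xf \<noteq> 0"
    using s00 s10 s01 s11 outer_target_nonzero by auto
  then show ?thesis
    using that w by blast
qed

lemma cross_ratio_of_states:
  "complex_of_real c \<in> cross_ratios (case_prod \<psi> ` (OA \<times> IX))"
proof -
  obtain w where w: "w \<in> Om" and nonzero: "\<forall>af\<in>{0,1}. \<forall>xf\<in>{0,1}. branch w af xf \<noteq> 0"
    using branches_nonzero by blast
  have state: "\<exists>u\<in>case_prod \<psi> ` (OA \<times> IX). \<exists>l. l \<noteq> 0 \<and> K w *v u = l *s target_vec c af xf"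
    if af: "af \<in> {0,1}" and xf: "xf \<in> {0,1}" for af xf
  proof -
    obtain a x l where "a \<in> OA" "x \<in> IX" "l \<noteq> 0" "K w *v \<psi> a x = l *s target_vec c af xf"
      using parallel_state_if_branch_nonzero[OF sum_branch_target[OF af xf] norm_target af xf w]
        nonzero af xf by blast
    then show ?thesis
      by (intro bexI[of _ "\<psi> a x"]) auto
  qed
  obtain u1 l1 where u1: "u1 \<in> case_prod \<psi> ` (OA \<times> IX)" "l1 \<noteq> 0" "K w *v u1 = l1 *s target_vec c 0 0"
    using state[of 0 0] by blast
  obtain u2 l2 where u2: "u2 \<in> case_prod \<psi> ` (OA \<times> IX)" "l2 \<noteq> 0" "K w *v u2 = l2 *s target_vec c 1 0"
    using state[of 1 0] by blast
  obtain u3 l3 where u3: "u3 \<in> case_prod \<psi> ` (OA \<times> IX)" "l3 \<noteq> 0" "K w *v u3 = l3 *s target_vec c 0 1"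
    using state[of 0 1] by blast
  obtain u4 l4 where u4: "u4 \<in> case_prod \<psi> ` (OA \<times> IX)" "l4 \<noteq> 0" "K w *v u4 = l4 *s target_vec c 1 1"
    using state[of 1 1] by blast
  have "cross_ratio u1 u2 u3 u4
      = cross_ratio (target_vec c 0 0) (target_vec c 1 0) (target_vec c 0 1) (target_vec c 1 1)"
    using cross_ratio_eq_if_matrix_maps_to_multiples[OF u1(3) u2(3) u3(3) u4(3) u1(2) u2(2) u3(2) u4(2)]
      wedge_target_vec_0 by simp
  also have "\<dots> = complex_of_real c"
    using cross_ratio_target_vec c_pos c_less_1 by simp
  finally have "complex_of_real c = cross_ratio u1 u2 u3 u4"
    by (rule sym)
  then show ?thesis
    unfolding cross_ratios_def using u1(1) u2(1) u3(1) u4(1) by blast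
qed

end

lemma cross_ratio_of_states_if_reachable:
  assumes "finite OA" "finite IX" "pure_DI_assemblage OA IX P \<psi>" "0 < c" "c < 1"
    and "one_way_LOCC_reachable OA IX P \<psi> (target_assemblage c)"
  shows "complex_of_real c \<in> cross_ratios (case_prod \<psi> ` (OA \<times> IX))"
proof -
  obtain Om K PX PA where "target_realisation OA IX P \<psi> Om K PX PA c"
    using assms unfolding one_way_LOCC_reachable_def target_realisation_def one_way_LOCC_def
      target_realisation_axioms_def instrument_def by blast
  then show ?thesis
    by (rule target_realisation.cross_ratio_of_states)
qed

lemma finite_tuples:
  assumes "\<forall>i<N - 1. finite (S i)"
  shows "finite (tuples N S)"
proof -
  have "tuples N S \<subseteq> {l. set l \<subseteq> (\<Union>i<N-1. S i) \<and> length l = N - 1}"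
    unfolding tuples_def by (auto simp: in_set_conv_nth) blast
  moreover have "finite {l. set l \<subseteq> (\<Union>i<N-1. S i) \<and> length l = N - 1}"
    by (rule finite_lists_length_eq) (use assms in auto)
  ultimately show ?thesis by (rule finite_subset)
qed

theorem theoremS2:
  fixes N :: nat
  assumes "N \<ge> 2"
  shows "\<not> (\<exists>(A :: nat \<Rightarrow> nat set) (X :: nat \<Rightarrow> nat set) P \<psi>.
            (\<forall>i<N - 1. finite (A i) \<and> finite (X i)) \<and>
            pure_DI_assemblage (tuples N A) (tuples N X) P \<psi> \<and>
            (\<forall>\<sigma>t. qubit_assemblage \<sigma>t \<longrightarrow>
                 one_way_LOCC_reachable (tuples N A) (tuples N X) P \<psi> \<sigma>t))"
proof
  assume "\<exists>(A :: nat \<Rightarrow> nat set) (X :: nat \<Rightarrow> nat set) P \<psi>.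
            (\<forall>i<N - 1. finite (A i) \<and> finite (X i)) \<and>
            pure_DI_assemblage (tuples N A) (tuples N X) P \<psi> \<and>
            (\<forall>\<sigma>t. qubit_assemblage \<sigma>t \<longrightarrow>
                 one_way_LOCC_reachable (tuples N A) (tuples N X) P \<psi> \<sigma>t)"
  then obtain A X :: "nat \<Rightarrow> nat set" and P \<psi> where
    finite: "\<forall>i<N - 1. finite (A i) \<and> finite (X i)" and
    assemblage: "pure_DI_assemblage (tuples N A) (tuples N X) P \<psi>" and
    universal: "\<forall>\<sigma>t. qubit_assemblage \<sigma>t \<longrightarrow>
                  one_way_LOCC_reachable (tuples N A) (tuples N X) P \<psi> \<sigma>t"
    by blast
  have finite_OA: "finite (tuples N A)" and finite_IX: "finite (tuples N X)"
    using finite by (simp_all add: finite_tuples)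
  then have "finite (cross_ratios (case_prod \<psi> ` (tuples N A \<times> tuples N X)))"
    by (simp add: finite_cross_ratios)
  then obtain c where c: "0 < c" "c < 1"
    and avoided: "complex_of_real c \<notin> cross_ratios (case_prod \<psi> ` (tuples N A \<times> tuples N X))"
    by (rule exists_real_avoiding_finite)
  have "one_way_LOCC_reachable (tuples N A) (tuples N X) P \<psi> (target_assemblage c)"
    using universal qubit_assemblage_target c by simp
  then have "complex_of_real c \<in> cross_ratios (case_prod \<psi> ` (tuples N A \<times> tuples N X))"
    using cross_ratio_of_states_if_reachable finite_OA finite_IX assemblage c by blast
  with avoided show False
    by contradiction
qed

end
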